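(* Let $f:\{-1,1\}^k\to\{0,1\}$, $\delta\in(0,1)$, $\zeta\in\mathcal{C}_\delta(f)$, and let $\zeta'=\zeta_{S,\pi,b}$ for an arbitrary nonempty $S\subseteq[k]$, permutation $\pi$ of $S$ and $b\in\{-1,1\}^{|S|}$. Let $\Sigma$ be the $|S|\times|S|$ covariance matrix with $\Sigma_{ij}=\zeta'(i,j)-\zeta'(0,i)\zeta'(0,j)$. Then $\Sigma$ is positive semidefinite with all eigenvalues at least $\delta$.
   Context: $\mathcal{C}(f)$ is the set of symmetric $(k+1)\times(k+1)$ moment matrices $\zeta(\nu)$ (indices $0..k$: $\zeta(i,i)=1$, $\zeta(0,i)=\mathbb{E}_\nu x_i$, $\zeta(i,j)=\mathbb{E}_\nu x_ix_j$ for $i\ne j$) of distributions $\nu$ on $f^{-1}(1)$, and $\mathcal{C}_\delta(f)=\{(1-\delta)\zeta+\delta I_{k+1}:\zeta\in\mathcal{C}(f)\}$. $\zeta_{S,\pi,b}$ is the submatrix on rows/columns $\{0\}\cup S$ with $S$-coordinates permuted by $\pi$, multiplied entrywise by $(1\ b)(1\ b)^T$; its rows/columns other than $0$ are indexed $1,\dots,|S|$. *)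

theory Defs
  imports "HOL-Probability.Probability_Mass_Function" "HOL-Combinatorics.Permutations"
    "Jordan_Normal_Form.Char_Poly"
begin

definition cube :: "nat \<Rightarrow> (nat \<Rightarrow> real) set" where
  "cube k = {x. (\<forall>i\<in>{1..k}. x i = -1 \<or> x i = 1) \<and> (\<forall>i. i \<notin> {1..k} \<longrightarrow> x i = 0)}"

definition aug :: "(nat \<Rightarrow> real) \<Rightarrow> nat \<Rightarrow> real" where
  "aug x i = (if i = 0 then 1 else x i)"

definition moment_matrix :: "(nat \<Rightarrow> real) pmf \<Rightarrow> nat \<Rightarrow> nat \<Rightarrow> real" where
  "moment_matrix \<nu> i j = (if i = j then 1 else measure_pmf.expectation \<nu> (\<lambda>x. aug x i * aug x j))"

definition C_set :: "nat \<Rightarrow> ((nat \<Rightarrow> real) \<Rightarrow> int) \<Rightarrow> (nat \<Rightarrow> nat \<Rightarrow> real) set" where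
  "C_set k f = {M. \<exists>\<nu>. set_pmf \<nu> \<subseteq> {x \<in> cube k. f x = 1} \<and>
      M = (\<lambda>i j. if i \<le> k \<and> j \<le> k then moment_matrix \<nu> i j else 0)}"

definition C_delta :: "nat \<Rightarrow> ((nat \<Rightarrow> real) \<Rightarrow> int) \<Rightarrow> real \<Rightarrow> (nat \<Rightarrow> nat \<Rightarrow> real) set" where
  "C_delta k f \<delta> = {M. \<exists>Z\<in>C_set k f.
      M = (\<lambda>i j. if i \<le> k \<and> j \<le> k then (1 - \<delta>) * Z i j + \<delta> * (if i = j then 1 else 0) else 0)}"

definition sub_index :: "nat set \<Rightarrow> (nat \<Rightarrow> nat) \<Rightarrow> nat \<Rightarrow> nat" where
  "sub_index S \<pi> i = (if i = 0 then 0 else \<pi> (sorted_list_of_set S ! (i - 1)))"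

definition restrict_mm ::
  "(nat \<Rightarrow> nat \<Rightarrow> real) \<Rightarrow> nat set \<Rightarrow> (nat \<Rightarrow> nat) \<Rightarrow> (nat \<Rightarrow> real) \<Rightarrow> nat \<Rightarrow> nat \<Rightarrow> real" where
  "restrict_mm Z S \<pi> b i j =
     (if i \<le> card S \<and> j \<le> card S
      then aug b i * aug b j * Z (sub_index S \<pi> i) (sub_index S \<pi> j) else 0)"

text \<open>Covariance matrix Sigma (|S| x |S|), entry (i,j) 0-based corresponds to paper indices i+1, j+1.\<close>
definition cov_matrix :: "nat \<Rightarrow> (nat \<Rightarrow> nat \<Rightarrow> real) \<Rightarrow> real mat" where
  "cov_matrix m Z = mat m m (\<lambda>(i, j). Z (i+1) (j+1) - Z 0 (i+1) * Z 0 (j+1))"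

definition psd :: "real mat \<Rightarrow> bool" where
  "psd A \<longleftrightarrow> A \<in> carrier_mat (dim_row A) (dim_row A) \<and> A\<^sup>T = A \<and>
     (\<forall>v \<in> carrier_vec (dim_row A). 0 \<le> v \<bullet> (A *\<^sub>v v))"

end

theory Submission
  imports Defs
begin

text \<open>
  Let \<open>\<nu>\<close> be the distribution on \<open>f\<^sup>-\<^sup>1(1)\<close> behind \<open>\<zeta>\<close> and put \<open>y\<^sub>i = b\<^sub>i x\<^sub>\<pi>\<^sub>(\<^sub>s\<^sub>i\<^sub>)\<close> for
  \<open>x \<sim> \<nu>\<close>, where \<open>s\<^sub>i\<close> is the \<open>i\<close>-th smallest element of \<open>S\<close>. As \<open>y\<^sub>i\<^sup>2 = 1\<close>, the entries
  of \<open>\<zeta>'\<close> are \<open>(1 - \<delta>) E[y\<^sub>i y\<^sub>j] + \<delta>[i = j]\<close> and \<open>(1 - \<delta>) E[y\<^sub>i]\<close>. Hence for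
  \<open>Y = \<Sum>\<^sub>i v\<^sub>i y\<^sub>i\<close> the quadratic form of \<open>\<Sigma>\<close> is
  \<open>v\<^sup>T \<Sigma> v = (1 - \<delta>) E[Y\<^sup>2] + \<delta> |v|\<^sup>2 - (1 - \<delta>)\<^sup>2 E[Y]\<^sup>2 \<ge> \<delta> |v|\<^sup>2\<close>,
  because \<open>E[Y]\<^sup>2 \<le> E[Y\<^sup>2]\<close> and \<open>(1 - \<delta>)\<^sup>2 \<le> 1 - \<delta>\<close>.
\<close>

lemma integrable_measure_pmf_bounded:
  fixes g :: "'a \<Rightarrow> real"
  assumes "\<And>x. x \<in> set_pmf \<nu> \<Longrightarrow> \<bar>g x\<bar> \<le> B"
  shows "integrable (measure_pmf \<nu>) g"
  by (rule measure_pmf.integrable_const_bound[where B = B]) (auto simp: AE_measure_pmf_iff assms)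

lemma (in prob_space) square_expectation_le_expectation_square:
  fixes Y :: "'a \<Rightarrow> real"
  assumes "integrable M Y" and "integrable M (\<lambda>x. (Y x)\<^sup>2)"
  shows "(expectation Y)\<^sup>2 \<le> expectation (\<lambda>x. (Y x)\<^sup>2)"
  using variance_eq[OF assms] by (metis diff_ge_0_iff_ge integral_nonneg_AE AE_I2 zero_le_power2)

definition mixed_covariance :: "'a pmf \<Rightarrow> ('a \<Rightarrow> nat \<Rightarrow> real) \<Rightarrow> real \<Rightarrow> nat \<Rightarrow> nat \<Rightarrow> real" where
  "mixed_covariance \<nu> y \<delta> i j =
    (1 - \<delta>) * measure_pmf.expectation \<nu> (\<lambda>x. y x i * y x j) + \<delta> * (if i = j then 1 else 0)
    - (1 - \<delta>)\<^sup>2 * (measure_pmf.expectation \<nu> (\<lambda>x. y x i) * measure_pmf.expectation \<nu> (\<lambda>x. y x j))"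

lemma mixed_covariance_commute: "mixed_covariance \<nu> y \<delta> i j = mixed_covariance \<nu> y \<delta> j i"
  by (simp add: mixed_covariance_def mult.commute)

lemma mixed_covariance_quadratic_form_ge:
  fixes \<nu> :: "'a pmf" and y :: "'a \<Rightarrow> nat \<Rightarrow> real" and v :: "nat \<Rightarrow> real"
  assumes bounded: "\<And>x i. x \<in> set_pmf \<nu> \<Longrightarrow> i < n \<Longrightarrow> \<bar>y x i\<bar> \<le> B"
    and "0 \<le> \<delta>" and "\<delta> \<le> 1"
  shows "\<delta> * (\<Sum>i<n. v i * v i) \<le> (\<Sum>i<n. v i * (\<Sum>j<n. mixed_covariance \<nu> y \<delta> i j * v j))"
proof -
  let ?E = "measure_pmf.expectation \<nu>"
  define Y where "Y x = (\<Sum>i<n. v i * y x i)" for x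
  have int1: "integrable \<nu> (\<lambda>x. y x i)" if "i < n" for i
    by (rule integrable_measure_pmf_bounded[where B = B]) (use bounded that in auto)
  have int2: "integrable \<nu> (\<lambda>x. y x i * y x j)" if "i < n" "j < n" for i j
    by (rule integrable_measure_pmf_bounded[where B = "B * B"])
      (use bounded that in \<open>auto simp: abs_mult intro: mult_mono'\<close>)
  have Y_square: "(Y x)\<^sup>2 = (\<Sum>i<n. \<Sum>j<n. v i * v j * (y x i * y x j))" for x
    unfolding Y_def power2_eq_square sum_product by (simp add: algebra_simps)
  have EY: "?E Y = (\<Sum>i<n. v i * ?E (\<lambda>x. y x i))"
    unfolding Y_def using int1 by (simp add: Bochner_Integration.integral_sum)
  have "?E (\<lambda>x. (Y x)\<^sup>2) = (\<Sum>i<n. ?E (\<lambda>x. \<Sum>j<n. v i * v j * (y x i * y x j)))"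
    unfolding Y_square
    by (rule Bochner_Integration.integral_sum) (auto intro!: Bochner_Integration.integrable_sum int2)
  also have "\<dots> = (\<Sum>i<n. \<Sum>j<n. v i * v j * ?E (\<lambda>x. y x i * y x j))"
    by (intro sum.cong refl, subst Bochner_Integration.integral_sum) (auto intro: int2)
  finally have EY2: "?E (\<lambda>x. (Y x)\<^sup>2) = (\<Sum>i<n. \<Sum>j<n. v i * v j * ?E (\<lambda>x. y x i * y x j))" .
  have "integrable \<nu> Y"
    unfolding Y_def by (auto intro!: Bochner_Integration.integrable_sum int1)
  moreover have "integrable \<nu> (\<lambda>x. (Y x)\<^sup>2)"
    unfolding Y_square by (auto intro!: Bochner_Integration.integrable_sum int2)
  ultimately have "(?E Y)\<^sup>2 \<le> ?E (\<lambda>x. (Y x)\<^sup>2)"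
    by (rule measure_pmf.square_expectation_le_expectation_square)
  moreover have "(1 - \<delta>)\<^sup>2 * (?E Y)\<^sup>2 \<le> (1 - \<delta>) * (?E Y)\<^sup>2"
    using assms(2,3) by (intro mult_right_mono) (auto simp: power2_eq_square mult_left_le_one_le)
  ultimately have variance_bound: "(1 - \<delta>)\<^sup>2 * (?E Y)\<^sup>2 \<le> (1 - \<delta>) * ?E (\<lambda>x. (Y x)\<^sup>2)"
    using assms(3) by (meson diff_ge_0_iff_ge mult_left_mono order_trans)
  have square_sum: "(\<Sum>i<n. \<Sum>j<n. p i * p j) = (\<Sum>i<n. p i)\<^sup>2" for p :: "nat \<Rightarrow> real"
    unfolding power2_eq_square sum_product ..
  have diagonal: "(\<Sum>i<n. \<Sum>j<n. \<delta> * (if i = j then v i * v j else 0)) = \<delta> * (\<Sum>i<n. v i * v i)"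
    by (simp add: sum_distrib_left if_distrib[of "\<lambda>t. \<delta> * t"] cong: if_cong)
  have "(\<Sum>i<n. v i * (\<Sum>j<n. mixed_covariance \<nu> y \<delta> i j * v j))
      = (\<Sum>i<n. \<Sum>j<n. (1 - \<delta>) * (v i * v j * ?E (\<lambda>x. y x i * y x j))
          + \<delta> * (if i = j then v i * v j else 0)
          - (1 - \<delta>)\<^sup>2 * ((v i * ?E (\<lambda>x. y x i)) * (v j * ?E (\<lambda>x. y x j))))"
    unfolding sum_distrib_left mixed_covariance_def by (intro sum.cong refl) (simp add: algebra_simps)
  also have "\<dots> = (1 - \<delta>) * ?E (\<lambda>x. (Y x)\<^sup>2) + \<delta> * (\<Sum>i<n. v i * v i) - (1 - \<delta>)\<^sup>2 * (?E Y)\<^sup>2"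
    unfolding EY EY2 square_sum[symmetric]
    using diagonal by (simp add: sum.distrib sum_subtractf sum_distrib_left)
  finally show ?thesis using variance_bound by simp
qed

lemma quadratic_form_mat_eq_sum:
  fixes A :: "'a :: comm_semiring_0 mat"
  assumes "A \<in> carrier_mat n n" and "v \<in> carrier_vec n"
  shows "v \<bullet> (A *\<^sub>v v) = (\<Sum>i<n. v $ i * (\<Sum>j<n. A $$ (i, j) * v $ j))"
  using assms unfolding scalar_prod_def
  by (auto simp: atLeast0LessThan row_def scalar_prod_def intro!: sum.cong)

lemma scalar_prod_self_pos:
  fixes v :: "real vec"
  assumes "v \<in> carrier_vec n" and "v \<noteq> 0\<^sub>v n"
  shows "0 < v \<bullet> v"
proof -
  obtain i where i: "i < n" "v $ i \<noteq> 0"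
    using assms by (metis carrier_vecD eq_vecI index_zero_vec(1,2))
  have "v \<bullet> v = (\<Sum>j\<in>{0..<n}. v $ j * v $ j)"
    using assms unfolding scalar_prod_def by simp
  also have "\<dots> > 0"
    by (rule sum_pos2[where i = i]) (use i in \<open>auto simp: zero_less_mult_iff\<close>)
  finally show ?thesis .
qed

lemma psd_if_quadratic_form_ge:
  assumes A: "A \<in> carrier_mat n n" and "A\<^sup>T = A" and "0 \<le> \<delta>"
    and bound: "\<And>v. v \<in> carrier_vec n \<Longrightarrow> \<delta> * (v \<bullet> v) \<le> v \<bullet> (A *\<^sub>v v)"
  shows "psd A"
  unfolding psd_def
proof (intro conjI ballI)
  fix v :: "real vec" assume "v \<in> carrier_vec (dim_row A)"
  then have v: "v \<in> carrier_vec n" using A by simp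
  have "0 \<le> v \<bullet> v" using v unfolding scalar_prod_def by (auto intro: sum_nonneg)
  then show "0 \<le> v \<bullet> (A *\<^sub>v v)"
    using bound[OF v] \<open>0 \<le> \<delta>\<close> by (smt (verit) mult_nonneg_nonneg)
qed (use assms in auto)

lemma eigenvalue_ge_if_quadratic_form_ge:
  fixes A :: "real mat"
  assumes A: "A \<in> carrier_mat n n"
    and bound: "\<And>v. v \<in> carrier_vec n \<Longrightarrow> \<delta> * (v \<bullet> v) \<le> v \<bullet> (A *\<^sub>v v)"
    and "eigenvalue A ev"
  shows "\<delta> \<le> ev"
proof -
  obtain v where v: "v \<in> carrier_vec n" "v \<noteq> 0\<^sub>v n" "A *\<^sub>v v = ev \<cdot>\<^sub>v v"
    using assms(3) A unfolding eigenvalue_def eigenvector_def by auto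
  have "\<delta> * (v \<bullet> v) \<le> ev * (v \<bullet> v)"
    using bound[OF v(1)] v by simp
  then show ?thesis using scalar_prod_self_pos[OF v(1,2)] by simp
qed

lemma mixed_covariance_matrix_psd_eigenvalue_ge:
  fixes A :: "real mat" and y :: "'a \<Rightarrow> nat \<Rightarrow> real"
  assumes A: "A \<in> carrier_mat n n"
    and entries: "\<And>i j. i < n \<Longrightarrow> j < n \<Longrightarrow> A $$ (i, j) = mixed_covariance \<nu> y \<delta> i j"
    and bounded: "\<And>x i. x \<in> set_pmf \<nu> \<Longrightarrow> i < n \<Longrightarrow> \<bar>y x i\<bar> \<le> B"
    and "0 \<le> \<delta>" and "\<delta> \<le> 1"
  shows "psd A \<and> (\<forall>ev. eigenvalue A ev \<longrightarrow> \<delta> \<le> ev)"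
proof -
  have bound: "\<delta> * (v \<bullet> v) \<le> v \<bullet> (A *\<^sub>v v)" if v: "v \<in> carrier_vec n" for v
  proof -
    have "v \<bullet> v = (\<Sum>i<n. v $ i * v $ i)"
      using v by (simp add: scalar_prod_def atLeast0LessThan)
    moreover have "v \<bullet> (A *\<^sub>v v) = (\<Sum>i<n. v $ i * (\<Sum>j<n. mixed_covariance \<nu> y \<delta> i j * v $ j))"
      unfolding quadratic_form_mat_eq_sum[OF A v] by (intro sum.cong refl arg_cong2[where f = "(*)"] entries) auto
    ultimately show ?thesis
      using mixed_covariance_quadratic_form_ge[OF bounded assms(4,5)] by simp
  qed
  have "A\<^sup>T = A"
    by (rule eq_matI) (use A in \<open>auto simp: entries mixed_covariance_commute\<close>)
  then show ?thesis
    using psd_if_quadratic_form_ge[OF A _ assms(4) bound] eigenvalue_ge_if_quadratic_form_ge[OF A bound]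
    by blast
qed

lemma cube_coordinate_cases: "x \<in> cube k \<Longrightarrow> x a = -1 \<or> x a = 1 \<or> x a = 0"
  unfolding cube_def by (cases "a \<in> {1..k}") blast+

lemma cube_coordinate_abs_le_1: "x \<in> cube k \<Longrightarrow> \<bar>x a\<bar> \<le> 1"
  using cube_coordinate_cases[of x k a] by auto

lemma cube_coordinate_square: "x \<in> cube k \<Longrightarrow> a \<in> {1..k} \<Longrightarrow> x a * x a = 1"
proof -
  assume "x \<in> cube k" "a \<in> {1..k}"
  then have "x a = -1 \<or> x a = 1" unfolding cube_def by blast
  then show ?thesis by auto
qed

lemma C_delta_moments:
  assumes "Z \<in> C_delta k f \<delta>"
  obtains \<nu> where "set_pmf \<nu> \<subseteq> cube k"
    and "\<And>a c. a \<in> {1..k} \<Longrightarrow> c \<in> {1..k} \<Longrightarrow>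
      Z a c = (1 - \<delta>) * measure_pmf.expectation \<nu> (\<lambda>x. x a * x c) + \<delta> * (if a = c then 1 else 0)"
    and "\<And>a. a \<in> {1..k} \<Longrightarrow> Z 0 a = (1 - \<delta>) * measure_pmf.expectation \<nu> (\<lambda>x. x a)"
proof -
  obtain \<nu> where supp: "set_pmf \<nu> \<subseteq> {x \<in> cube k. f x = 1}" and
    Z: "Z = (\<lambda>i j. if i \<le> k \<and> j \<le> k then
      (1 - \<delta>) * moment_matrix \<nu> i j + \<delta> * (if i = j then 1 else 0) else 0)"
    using assms unfolding C_delta_def C_set_def by (auto cong: if_cong)
  have "moment_matrix \<nu> a a = measure_pmf.expectation \<nu> (\<lambda>x. x a * x a)" if "a \<in> {1..k}" for a
  proof -
    have "measure_pmf.expectation \<nu> (\<lambda>x. x a * x a) = measure_pmf.expectation \<nu> (\<lambda>_. 1)"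
      by (rule integral_cong_AE) (use supp that cube_coordinate_square in \<open>auto simp: AE_measure_pmf_iff\<close>)
    then show ?thesis unfolding moment_matrix_def by simp
  qed
  then have moments: "moment_matrix \<nu> a c = measure_pmf.expectation \<nu> (\<lambda>x. x a * x c)"
    if "a \<in> {1..k}" "c \<in> {1..k}" for a c
    using that by (cases "a = c") (auto simp: moment_matrix_def aug_def)
  show ?thesis
    by (rule that) (use supp moments in \<open>auto simp: Z moment_matrix_def aug_def\<close>)
qed

lemma sub_index_in_permuted_set:
  assumes "finite S" and "\<pi> permutes S" and "i < card S"
  shows "sub_index S \<pi> (Suc i) \<in> S"
proof -
  have "sorted_list_of_set S ! i \<in> S"
    using assms by (metis length_sorted_list_of_set nth_mem set_sorted_list_of_set)
  then show ?thesis by (simp add: sub_index_def permutes_in_image[OF assms(2)])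
qed

lemma sub_index_eq_iff:
  assumes "finite S" and "\<pi> permutes S" and "i < card S" and "j < card S"
  shows "sub_index S \<pi> (Suc i) = sub_index S \<pi> (Suc j) \<longleftrightarrow> i = j"
  using assms permutes_inj[OF assms(2)]
  by (auto simp: sub_index_def inj_eq nth_eq_iff_index_eq)

text \<open>Indexed from 0 like the rows of \<open>cov_matrix\<close>, whereas \<open>b\<close> and \<open>sub_index\<close> start at 1.\<close>

definition signed_coordinates ::
    "nat set \<Rightarrow> (nat \<Rightarrow> nat) \<Rightarrow> (nat \<Rightarrow> real) \<Rightarrow> (nat \<Rightarrow> real) \<Rightarrow> nat \<Rightarrow> real" where
  "signed_coordinates S \<pi> b x i = b (Suc i) * x (sub_index S \<pi> (Suc i))"

lemma cov_matrix_restrict_mm_eq_mixed_covariance: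
  fixes \<nu> :: "(nat \<Rightarrow> real) pmf"
  assumes Z: "\<And>a c. a \<in> {1..k} \<Longrightarrow> c \<in> {1..k} \<Longrightarrow>
      Z a c = (1 - \<delta>) * measure_pmf.expectation \<nu> (\<lambda>x. x a * x c) + \<delta> * (if a = c then 1 else 0)"
    and Z0: "\<And>a. a \<in> {1..k} \<Longrightarrow> Z 0 a = (1 - \<delta>) * measure_pmf.expectation \<nu> (\<lambda>x. x a)"
    and S: "S \<subseteq> {1..k}" and \<pi>: "\<pi> permutes S"
    and b: "\<forall>i\<in>{1..card S}. b i = -1 \<or> b i = 1"
    and "i < card S" and "j < card S"
  shows "cov_matrix (card S) (restrict_mm Z S \<pi> b) $$ (i, j) =
    mixed_covariance \<nu> (signed_coordinates S \<pi> b) \<delta> i j"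
proof -
  let ?s = "\<lambda>i. sub_index S \<pi> (Suc i)"
  have "finite S" using S finite_subset by blast
  then have "?s i \<in> S" "?s j \<in> S" and s_eq: "?s i = ?s j \<longleftrightarrow> i = j"
    using sub_index_in_permuted_set[OF _ \<pi>] sub_index_eq_iff[OF _ \<pi>] assms(6,7) by auto
  then have s: "?s i \<in> {1..k}" "?s j \<in> {1..k}" using S by auto
  have "Suc i \<in> {1..card S}" using assms(6) by simp
  then have b_square: "b (Suc i) * b (Suc i) = 1" using b by force
  define c where "c = (if i = j then 1 else 0 :: real)"
  have Zij: "Z (?s i) (?s j) = (1 - \<delta>) * measure_pmf.expectation \<nu> (\<lambda>x. x (?s i) * x (?s j)) + \<delta> * c"
    using Z[OF s] s_eq unfolding c_def by simp
  have sign: "b (Suc i) * b (Suc j) * c = c"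
    using b_square unfolding c_def by auto
  have "(\<lambda>x. signed_coordinates S \<pi> b x i * signed_coordinates S \<pi> b x j)
      = (\<lambda>x. (b (Suc i) * b (Suc j)) * (x (?s i) * x (?s j)))"
    by (auto simp: signed_coordinates_def)
  moreover have "cov_matrix (card S) (restrict_mm Z S \<pi> b) $$ (i, j) =
      b (Suc i) * b (Suc j) * Z (?s i) (?s j) - b (Suc i) * Z 0 (?s i) * (b (Suc j) * Z 0 (?s j))"
    using assms(6,7) by (simp add: cov_matrix_def restrict_mm_def aug_def sub_index_def)
  ultimately show ?thesis
    unfolding mixed_covariance_def c_def[symmetric] Zij Z0[OF s(1)] Z0[OF s(2)] signed_coordinates_def
    using sign by (simp add: power2_eq_square algebra_simps)
qed

lemma signed_coordinates_abs_le_1: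
  assumes "x \<in> cube k" and "\<forall>i\<in>{1..card S}. b i = -1 \<or> b i = 1" and "i < card S"
  shows "\<bar>signed_coordinates S \<pi> b x i\<bar> \<le> 1"
proof -
  have "Suc i \<in> {1..card S}" using assms(3) by simp
  then have "\<bar>b (Suc i)\<bar> = 1" using assms(2) by force
  then show ?thesis
    using cube_coordinate_abs_le_1[OF assms(1)] by (simp add: signed_coordinates_def abs_mult)
qed

theorem mainTheorem9:
  fixes k :: nat and f :: "(nat \<Rightarrow> real) \<Rightarrow> int" and \<delta> :: real
    and Z :: "nat \<Rightarrow> nat \<Rightarrow> real" and S :: "nat set" and \<pi> :: "nat \<Rightarrow> nat" and b :: "nat \<Rightarrow> real"
  assumes "\<forall>x\<in>cube k. f x \<in> {0, 1}"
    and "0 < \<delta>" and "\<delta> < 1"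
    and "Z \<in> C_delta k f \<delta>"
    and "S \<subseteq> {1..k}" and "S \<noteq> {}"
    and "\<pi> permutes S"
    and "\<forall>i\<in>{1..card S}. b i = -1 \<or> b i = 1"
  shows "psd (cov_matrix (card S) (restrict_mm Z S \<pi> b))
    \<and> (\<forall>ev. eigenvalue (cov_matrix (card S) (restrict_mm Z S \<pi> b)) ev \<longrightarrow> \<delta> \<le> ev)"
proof -
  obtain \<nu> where supp: "set_pmf \<nu> \<subseteq> cube k"
    and Z: "\<And>a c. a \<in> {1..k} \<Longrightarrow> c \<in> {1..k} \<Longrightarrow>
      Z a c = (1 - \<delta>) * measure_pmf.expectation \<nu> (\<lambda>x. x a * x c) + \<delta> * (if a = c then 1 else 0)"
    and Z0: "\<And>a. a \<in> {1..k} \<Longrightarrow> Z 0 a = (1 - \<delta>) * measure_pmf.expectation \<nu> (\<lambda>x. x a)"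
    by (rule C_delta_moments[OF assms(4)]) blast
  show ?thesis
  proof (rule mixed_covariance_matrix_psd_eigenvalue_ge)
    show "cov_matrix (card S) (restrict_mm Z S \<pi> b) \<in> carrier_mat (card S) (card S)"
      by (simp add: cov_matrix_def)
    show "cov_matrix (card S) (restrict_mm Z S \<pi> b) $$ (i, j) = mixed_covariance \<nu> (signed_coordinates S \<pi> b) \<delta> i j"
      if "i < card S" "j < card S" for i j
      by (rule cov_matrix_restrict_mm_eq_mixed_covariance[OF Z Z0 assms(5,7,8) that])
    show "\<bar>signed_coordinates S \<pi> b x i\<bar> \<le> 1" if "x \<in> set_pmf \<nu>" "i < card S" for x i
      using signed_coordinates_abs_le_1 supp that assms(8) by blast
  qed (use assms(2,3) in auto)
qed

end
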